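(* Consider the problem $\min_{x\in X}f_0(x)$ s.t. $f_i(x)\le0$, $i\in[M]$, with $X\subseteq\mathbb{R}^n$ compact convex and $f_0,\dots,f_M$ convex real-valued on $X$; let $\mathbf f=(f_1,\dots,f_M)^\top$ and $d(z)=\min_{x\in X}\{f_0(x)+z^\top\mathbf f(x)\}$ for $z\ge0$. Let $\bar x\in X$ and $\bar z\ge0$ be random vectors, and suppose there are constants $\epsilon_1,\epsilon_0$ such that for every (possibly random, possibly depending on $(\bar x,\bar z)$) $x\in X$ and $z\ge0$, $$\mathbb{E}\big[f_0(\bar x)-f_0(x)-\langle\bar z,\mathbf f(x)\rangle+\langle z,\mathbf f(\bar x)\rangle\big]\le\epsilon_1+\epsilon_0\mathbb{E}[\|z\|^2].$$ Then for any $(x^*,z^* )$ satisfying the KKT conditions (i.e. $x^*\in X$, $0\in\partial f_0(x^* )+\mathcal N_X(x^* )+\sum_iz_i^*\partial f_i(x^* )$, $f_i(x^* )\le0$, $z_i^*\ge0$, $z_i^*f_i(x^* )=0$), $$\mathbb{E}\big[|f_0(\bar x)-f_0(x^* )|\big]\le2\epsilon_1+9\epsilon_0\|z^*\|^2,$$ $$\mathbb{E}\Big[\sum_{i=1}^M[f_i(\bar x)]_+\Big]\le\epsilon_1+\epsilon_0\|\mathbf 1+z^*\|^2,$$ $$\mathbb{E}\big[d(z^* )-d(\bar z)\big]\le\frac32\big(\epsilon_1+3\epsilon_0\|z^*\|^2\big).$$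
   Context: $[a]_+=\max\{a,0\}$; $\mathbf 1$ is the all-ones vector; $\mathcal N_X$ is the normal cone of $X$. *)

theory Defs
  imports "HOL-Probability.Probability"
begin

text \<open>Constraint functions are indexed by nat: f 0 is the objective, f 1, ..., f M the
  constraints. Dual vectors z in R^M are functions nat => real, only components 1..M matter.\<close>

definition subdiff :: "('a::euclidean_space \<Rightarrow> real) \<Rightarrow> 'a set \<Rightarrow> 'a \<Rightarrow> 'a set" where
  "subdiff g X x = {s. \<forall>y\<in>X. g y \<ge> g x + s \<bullet> (y - x)}"

definition normal_cone :: "'a::euclidean_space set \<Rightarrow> 'a \<Rightarrow> 'a set" where
  "normal_cone X x = {v. \<forall>y\<in>X. v \<bullet> (y - x) \<le> 0}"

definition lagr :: "(nat \<Rightarrow> 'a \<Rightarrow> real) \<Rightarrow> nat \<Rightarrow> (nat \<Rightarrow> real) \<Rightarrow> 'a \<Rightarrow> real" where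
  "lagr f M z x = f 0 x + (\<Sum>i=1..M. z i * f i x)"

definition dualfun :: "'a set \<Rightarrow> (nat \<Rightarrow> 'a \<Rightarrow> real) \<Rightarrow> nat \<Rightarrow> (nat \<Rightarrow> real) \<Rightarrow> real" where
  "dualfun X f M z = (INF x\<in>X. lagr f M z x)"

definition sqnorm :: "nat \<Rightarrow> (nat \<Rightarrow> real) \<Rightarrow> real" where
  "sqnorm M z = (\<Sum>i=1..M. (z i)\<^sup>2)"

definition KKT :: "'a::euclidean_space set \<Rightarrow> (nat \<Rightarrow> 'a \<Rightarrow> real) \<Rightarrow> nat \<Rightarrow> 'a \<Rightarrow> (nat \<Rightarrow> real) \<Rightarrow> bool" where
  "KKT X f M xs zs \<longleftrightarrow> xs \<in> X \<and>
     (\<exists>g0 v g. g0 \<in> subdiff (f 0) X xs \<and> v \<in> normal_cone X xs \<and>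
        (\<forall>i\<in>{1..M}. g i \<in> subdiff (f i) X xs) \<and>
        g0 + v + (\<Sum>i=1..M. zs i *\<^sub>R g i) = 0) \<and>
     (\<forall>i\<in>{1..M}. f i xs \<le> 0 \<and> zs i \<ge> 0 \<and> zs i * f i xs = 0)"

definition gap_integrand ::
  "(nat \<Rightarrow> 'a \<Rightarrow> real) \<Rightarrow> nat \<Rightarrow> ('w \<Rightarrow> 'a) \<Rightarrow> ('w \<Rightarrow> nat \<Rightarrow> real) \<Rightarrow> ('w \<Rightarrow> 'a) \<Rightarrow> ('w \<Rightarrow> nat \<Rightarrow> real) \<Rightarrow> 'w \<Rightarrow> real" where
  "gap_integrand f M xb zb x z \<omega> =
     f 0 (xb \<omega>) - f 0 (x \<omega>) - (\<Sum>i=1..M. zb \<omega> i * f i (x \<omega>)) + (\<Sum>i=1..M. z \<omega> i * f i (xb \<omega>))"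

definition admissible ::
  "'w measure \<Rightarrow> 'a::euclidean_space set \<Rightarrow> (nat \<Rightarrow> 'a \<Rightarrow> real) \<Rightarrow> nat \<Rightarrow> ('w \<Rightarrow> 'a) \<Rightarrow> ('w \<Rightarrow> nat \<Rightarrow> real) \<Rightarrow> ('w \<Rightarrow> 'a) \<Rightarrow> ('w \<Rightarrow> nat \<Rightarrow> real) \<Rightarrow> bool" where
  "admissible P X f M xb zb x z \<longleftrightarrow>
     x \<in> borel_measurable P \<and> (\<forall>\<omega>\<in>space P. x \<omega> \<in> X) \<and>
     (\<forall>i\<in>{1..M}. (\<lambda>\<omega>. z \<omega> i) \<in> borel_measurable P \<and> (\<forall>\<omega>\<in>space P. z \<omega> i \<ge> 0)) \<and>
     integrable P (gap_integrand f M xb zb x z) \<and>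
     integrable P (\<lambda>\<omega>. sqnorm M (z \<omega>))"

end

theory Submission
  imports Defs
begin

text \<open>The stationarity condition and the subgradient inequalities make \<open>(xs, zs)\<close> a saddle
  point of the Lagrangian: \<open>f 0 xs \<le> f 0 x + \<langle>zs, f x\<rangle>\<close> on \<open>X\<close>, with equality at
  \<open>xs\<close> by complementary slackness, so \<open>d(zs) = f 0 xs\<close>. With \<open>x = xs\<close>, the gap dominates \<open>f 0 xb - f 0 xs + \<langle>z, f xb\<rangle>\<close>; choosing
  \<open>z = 2 zs\<close>, resp. \<open>z = zs + 1\<close>, on the constraints violated at \<open>xb\<close> (and
  \<open>0\<close>, resp. \<open>zs\<close>, elsewhere) turns this into \<open>\<bar>f 0 xb - f 0 xs\<bar>\<close>, resp.
  \<open>\<Sum>\<^sub>i [f i xb]\<^sub>+\<close>, by the saddle inequality at \<open>xb\<close>. With \<open>z = zs\<close> and \<open>x\<close> a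
  measurable \<open>\<delta>\<close>-minimiser of the Lagrangian at \<open>zb\<close>, the gap dominates
  \<open>d(zs) - d(zb) - \<delta>\<close>. Finally, constant multipliers \<open>z = t\<close> with \<open>t \<rightarrow> \<infinity>\<close> force
  \<open>eps0 \<ge> 0\<close>, which turns the three estimates into the stated ones.\<close>

lemma nonneg_if_affine_le_quadratic:
  fixes A B c :: real
  assumes le: "\<forall>t\<ge>0. A + t * B \<le> c * t\<^sup>2"
  shows "c \<ge> 0"
proof (rule ccontr)
  assume "\<not> c \<ge> 0"
  then have e: "- c > 0" by simp
  define t where "t = max 1 ((\<bar>A\<bar> + \<bar>B\<bar> + 1) / - c)"
  have t1: "t \<ge> 1" unfolding t_def by simp
  have "(\<bar>A\<bar> + \<bar>B\<bar> + 1) / - c \<le> t" unfolding t_def by simp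
  then have ct: "- c * t \<ge> \<bar>A\<bar> + \<bar>B\<bar> + 1" using e by (simp add: field_simps)
  have "- c * t\<^sup>2 = t * (- c * t)" by (simp add: power2_eq_square)
  also have "\<dots> \<ge> t * (\<bar>A\<bar> + \<bar>B\<bar> + 1)" using ct t1 by (intro mult_left_mono) auto
  finally have "- c * t\<^sup>2 \<ge> t * \<bar>B\<bar> + t * (\<bar>A\<bar> + 1)" by (simp add: algebra_simps)
  moreover have "t * (\<bar>A\<bar> + 1) \<ge> \<bar>A\<bar> + 1" using mult_right_mono[OF t1, of "\<bar>A\<bar> + 1"] by simp
  moreover have "t * B \<ge> - (t * \<bar>B\<bar>)" using abs_ge_minus_self[of "t * B"] t1 by (simp add: abs_mult)
  moreover have "A + t * B \<le> c * t\<^sup>2" using le t1 by simp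
  ultimately show False using abs_ge_minus_self[of A] by linarith
qed

text \<open>No continuity of the \<open>f i\<close> is needed: one point of \<open>X\<close> is picked in each of the
  countably many rational boxes of value space that \<open>X\<close> meets.\<close>
lemma countable_value_dense_subset:
  fixes f :: "nat \<Rightarrow> 'a \<Rightarrow> real"
  obtains C where "countable C" "C \<subseteq> X" "\<forall>x\<in>X. \<forall>e>0. \<exists>c\<in>C. \<forall>i\<le>M. \<bar>f i c - f i x\<bar> < e"
proof
  define Q where "Q = (\<lambda>(q :: rat list, r :: rat).
    {x\<in>X. \<forall>i\<le>M. \<bar>f i x - real_of_rat (q ! i)\<bar> < real_of_rat r})"
  define C where "C = (\<lambda>p. SOME x. x \<in> Q p) ` {p. Q p \<noteq> {}}"
  have some_in_Q: "(SOME x. x \<in> Q p) \<in> Q p" if "Q p \<noteq> {}" for p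
    using that by (simp add: some_in_eq)
  show "countable C" unfolding C_def by simp
  show "C \<subseteq> X" unfolding C_def using some_in_Q by (force simp: Q_def)
  show "\<forall>x\<in>X. \<forall>e>0. \<exists>c\<in>C. \<forall>i\<le>M. \<bar>f i c - f i x\<bar> < e"
  proof (intro ballI allI impI)
    fix x e assume x: "x \<in> X" and e: "(e :: real) > 0"
    obtain r where r: "0 < real_of_rat r" "real_of_rat r < e / 2"
      using of_rat_dense[of 0 "e / 2"] e by auto
    have "\<exists>q. \<bar>f i x - real_of_rat q\<bar> < real_of_rat r" for i
    proof -
      obtain q where "f i x - real_of_rat r < real_of_rat q" "real_of_rat q < f i x + real_of_rat r"
        using of_rat_dense[of "f i x - real_of_rat r" "f i x + real_of_rat r"] r(1) by auto
      then show ?thesis by (auto simp: abs_less_iff intro!: exI[of _ q])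
    qed
    then obtain qf where qf: "\<And>i. \<bar>f i x - real_of_rat (qf i)\<bar> < real_of_rat r" by metis
    define p where "p = (map qf [0..<Suc M], r)"
    have xQ: "x \<in> Q p"
      unfolding Q_def p_def using x qf by (simp del: upt_Suc add: nth_map)
    then have "(SOME x. x \<in> Q p) \<in> C" unfolding C_def by blast
    moreover have "\<forall>i\<le>M. \<bar>f i (SOME x. x \<in> Q p) - f i x\<bar> < e"
      using some_in_Q[of p] xQ r unfolding Q_def p_def by (fastforce split: prod.splits)
    ultimately show "\<exists>c\<in>C. \<forall>i\<le>M. \<bar>f i c - f i x\<bar> < e" by blast
  qed
qed

lemma lagr_diff_abs_le:
  assumes "\<forall>i\<le>M. \<bar>f i c - f i x\<bar> < e"
  shows "\<bar>lagr f M z c - lagr f M z x\<bar> \<le> e * (1 + (\<Sum>i=1..M. \<bar>z i\<bar>))"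
proof -
  have "lagr f M z c - lagr f M z x = (f 0 c - f 0 x) + (\<Sum>i=1..M. z i * (f i c - f i x))"
    unfolding lagr_def by (simp add: sum_subtractf[symmetric] algebra_simps)
  also have "\<bar>\<dots>\<bar> \<le> \<bar>f 0 c - f 0 x\<bar> + (\<Sum>i=1..M. \<bar>z i\<bar> * \<bar>f i c - f i x\<bar>)"
    by (rule order_trans[OF abs_triangle_ineq]) (auto intro!: order_trans[OF sum_abs] simp: abs_mult)
  also have "\<dots> \<le> e + (\<Sum>i=1..M. \<bar>z i\<bar> * e)"
    using assms by (intro add_mono sum_mono mult_left_mono) (auto simp: less_imp_le)
  also have "\<dots> = e * (1 + (\<Sum>i=1..M. \<bar>z i\<bar>))"
    by (simp add: distrib_left sum_distrib_left mult.commute)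
  finally show ?thesis .
qed

lemma lagr_near_dualfun_on_value_dense:
  assumes dense: "\<forall>x\<in>X. \<forall>e>0. \<exists>c\<in>C. \<forall>i\<le>M. \<bar>f i c - f i x\<bar> < e"
    and bdd: "bdd_below (lagr f M z ` X)" and "X \<noteq> {}" and "\<delta> > 0"
  shows "\<exists>c\<in>C. lagr f M z c < dualfun X f M z + \<delta>"
proof -
  obtain y where y: "y \<in> X" "lagr f M z y < dualfun X f M z + \<delta> / 2"
    using cINF_less_iff[OF \<open>X \<noteq> {}\<close> bdd, of "dualfun X f M z + \<delta> / 2"] \<open>\<delta> > 0\<close>
    unfolding dualfun_def by auto
  define K where "K = 1 + (\<Sum>i=1..M. \<bar>z i\<bar>)"
  have K: "K \<ge> 1" unfolding K_def by (simp add: sum_nonneg)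
  then obtain c where c: "c \<in> C" "\<forall>i\<le>M. \<bar>f i c - f i y\<bar> < \<delta> / (2 * K)"
    using dense y(1) \<open>\<delta> > 0\<close> by (metis divide_pos_pos mult_pos_pos zero_less_numeral less_le_trans zero_less_one)
  have "\<bar>lagr f M z c - lagr f M z y\<bar> \<le> \<delta> / (2 * K) * K"
    using lagr_diff_abs_le[OF c(2)] unfolding K_def .
  also have "\<dots> = \<delta> / 2" using K by (simp add: field_simps)
  finally show ?thesis using y(2) c(1) by (intro bexI[of _ c]) linarith+
qed

text \<open>Selecting among countably many candidates gives measurability into the discrete space,
  hence of every composition \<open>f i \<circ> x\<close>, although the \<open>f i\<close> need not be Borel.\<close>
lemma measurable_near_minimizer_of_lagr:
  fixes z :: "'w \<Rightarrow> nat \<Rightarrow> real"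
  assumes "X \<noteq> {}"
    and z_meas: "\<And>i. i \<in> {1..M} \<Longrightarrow> (\<lambda>\<omega>. z \<omega> i) \<in> borel_measurable N"
    and d_meas: "(\<lambda>\<omega>. dualfun X f M (z \<omega>)) \<in> borel_measurable N"
    and bdd: "\<And>\<omega>. \<omega> \<in> space N \<Longrightarrow> bdd_below (lagr f M (z \<omega>) ` X)"
    and "\<delta> > 0"
  obtains x where "x \<in> measurable N (count_space UNIV)" "\<And>\<omega>. x \<omega> \<in> X"
    "\<And>\<omega>. \<omega> \<in> space N \<Longrightarrow> lagr f M (z \<omega>) (x \<omega>) < dualfun X f M (z \<omega>) + \<delta>"
proof -
  obtain C where C: "countable C" "C \<subseteq> X" and dense: "\<forall>x\<in>X. \<forall>e>0. \<exists>c\<in>C. \<forall>i\<le>M. \<bar>f i c - f i x\<bar> < e"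
    by (rule countable_value_dense_subset)
  have "C \<noteq> {}"
  proof -
    obtain x where "x \<in> X" using \<open>X \<noteq> {}\<close> by blast
    then show ?thesis using dense[rule_format, of x 1] by auto
  qed
  define c where "c = from_nat_into C"
  have cX: "c n \<in> X" for n unfolding c_def using from_nat_into[OF \<open>C \<noteq> {}\<close>] C(2) by blast
  have "range c = C" unfolding c_def using range_from_nat_into[OF \<open>C \<noteq> {}\<close> C(1)] .
  then have near: "\<exists>n. lagr f M (z \<omega>) (c n) < dualfun X f M (z \<omega>) + \<delta>" if "\<omega> \<in> space N" for \<omega>
    using lagr_near_dualfun_on_value_dense[OF dense bdd[OF that] \<open>X \<noteq> {}\<close> \<open>\<delta> > 0\<close>] by blast
  define n where "n = (\<lambda>\<omega>. LEAST k. lagr f M (z \<omega>) (c k) < dualfun X f M (z \<omega>) + \<delta>)"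
  have n_meas: "n \<in> measurable N (count_space UNIV)"
    unfolding n_def
  proof (rule measurable_Least)
    fix k
    have "(\<lambda>\<omega>. lagr f M (z \<omega>) (c k)) \<in> borel_measurable N"
      unfolding lagr_def by (intro borel_measurable_add borel_measurable_sum borel_measurable_times
          borel_measurable_const z_meas)
    then show "Measurable.pred N (\<lambda>\<omega>. lagr f M (z \<omega>) (c k) < dualfun X f M (z \<omega>) + \<delta>)"
      using d_meas by measurable
  qed
  show ?thesis
  proof
    show "(\<lambda>\<omega>. c (n \<omega>)) \<in> measurable N (count_space UNIV)"
      using n_meas by (rule measurable_compose) simp
    show "c (n \<omega>) \<in> X" for \<omega> by (rule cX)
    show "lagr f M (z \<omega>) (c (n \<omega>)) < dualfun X f M (z \<omega>) + \<delta>" if "\<omega> \<in> space N" for \<omega>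
      unfolding n_def using near[OF that] by (rule LeastI_ex)
  qed
qed

lemma bdd_below_if_subgradient:
  assumes "s \<in> subdiff g X x" "bounded X"
  shows "bdd_below (g ` X)"
proof -
  obtain R where R: "\<forall>y\<in>X. norm y \<le> R" using \<open>bounded X\<close> unfolding bounded_iff by blast
  have "g x - norm s * (R + norm x) \<le> g y" if y: "y \<in> X" for y
  proof -
    have "g y \<ge> g x + s \<bullet> (y - x)" using assms(1) y unfolding subdiff_def by blast
    moreover have "- (s \<bullet> (y - x)) \<le> norm s * norm (y - x)"
      using norm_cauchy_schwarz[of "- s" "y - x"] by simp
    moreover have "norm s * norm (y - x) \<le> norm s * (R + norm x)"
      using R y norm_triangle_ineq4[of y x] by (intro mult_left_mono) fastforce+
    ultimately show ?thesis by linarith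
  qed
  then show ?thesis by (rule bdd_belowI2)
qed

lemma KKT_multiplier_nonneg: "KKT X f M xs zs \<Longrightarrow> i \<in> {1..M} \<Longrightarrow> 0 \<le> zs i"
  unfolding KKT_def by blast

lemma KKT_feasible: "KKT X f M xs zs \<Longrightarrow> i \<in> {1..M} \<Longrightarrow> f i xs \<le> 0"
  unfolding KKT_def by blast

lemma KKT_lagr_eq:
  assumes "KKT X f M xs zs"
  shows "lagr f M zs xs = f 0 xs"
proof -
  have "(\<Sum>i=1..M. zs i * f i xs) = 0"
    using assms unfolding KKT_def by (intro sum.neutral) blast
  then show ?thesis unfolding lagr_def by simp
qed

lemma KKT_subgradient_exists:
  assumes "KKT X f M xs zs" "i \<le> M"
  obtains s where "s \<in> subdiff (f i) X xs"
proof (cases "i = 0")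
  case True
  then show ?thesis using assms(1) that unfolding KKT_def by blast
next
  case False
  then have "i \<in> {1..M}" using assms(2) by simp
  then show ?thesis using assms(1) that unfolding KKT_def by blast
qed

lemma KKT_bdd_below_lagr:
  assumes kkt: "KKT X f M xs zs" and "bounded X" and z: "\<forall>i\<in>{1..M}. 0 \<le> z i"
  shows "bdd_below (lagr f M z ` X)"
proof -
  have "\<exists>b. \<forall>y\<in>X. b \<le> f i y" if "i \<le> M" for i
    using KKT_subgradient_exists[OF kkt that] bdd_below_if_subgradient \<open>bounded X\<close>
    unfolding bdd_below_def by (metis imageI)
  then obtain B where B: "\<And>i y. i \<le> M \<Longrightarrow> y \<in> X \<Longrightarrow> B i \<le> f i y" by metis
  show ?thesis
  proof (rule bdd_belowI2)
    fix y assume "y \<in> X"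
    then have "B 0 + (\<Sum>i=1..M. z i * B i) \<le> f 0 y + (\<Sum>i=1..M. z i * f i y)"
      using z B by (intro add_mono sum_mono mult_left_mono) auto
    then show "B 0 + (\<Sum>i=1..M. z i * B i) \<le> lagr f M z y" unfolding lagr_def .
  qed
qed

lemma KKT_saddle:
  assumes kkt: "KKT X f M xs zs" and y: "y \<in> X"
  shows "f 0 xs \<le> lagr f M zs y"
proof -
  from kkt obtain g0 v g where g0: "g0 \<in> subdiff (f 0) X xs" and v: "v \<in> normal_cone X xs"
    and g: "\<forall>i\<in>{1..M}. g i \<in> subdiff (f i) X xs"
    and stationary: "g0 + v + (\<Sum>i=1..M. zs i *\<^sub>R g i) = 0"
    unfolding KKT_def by blast
  have "zs i *\<^sub>R g i \<bullet> (y - xs) \<le> zs i * f i y" if i: "i \<in> {1..M}" for i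
  proof -
    have "f i xs + g i \<bullet> (y - xs) \<le> f i y" using g i y unfolding subdiff_def by blast
    then have "zs i * (f i xs + g i \<bullet> (y - xs)) \<le> zs i * f i y"
      using KKT_multiplier_nonneg[OF kkt i] by (rule mult_left_mono)
    moreover have "zs i * f i xs = 0" using kkt i unfolding KKT_def by blast
    ultimately show ?thesis by (simp add: distrib_left)
  qed
  then have "(\<Sum>i=1..M. zs i *\<^sub>R g i) \<bullet> (y - xs) \<le> (\<Sum>i=1..M. zs i * f i y)"
    unfolding inner_sum_left by (rule sum_mono)
  moreover have "(\<Sum>i=1..M. zs i *\<^sub>R g i) = - g0 - v"
    using stationary by (simp add: eq_neg_iff_add_eq_0 algebra_simps)
  moreover have "f 0 xs + g0 \<bullet> (y - xs) \<le> f 0 y" using g0 y unfolding subdiff_def by blast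
  moreover have "v \<bullet> (y - xs) \<le> 0" using v y unfolding normal_cone_def by blast
  ultimately show ?thesis unfolding lagr_def by (simp add: inner_diff_left)
qed

lemma KKT_dualfun_eq:
  assumes "KKT X f M xs zs" "bounded X"
  shows "dualfun X f M zs = f 0 xs"
proof -
  have "xs \<in> X" using assms(1) unfolding KKT_def by blast
  have "bdd_below (lagr f M zs ` X)"
    by (intro KKT_bdd_below_lagr[OF assms] ballI KKT_multiplier_nonneg[OF assms(1)])
  then show ?thesis unfolding dualfun_def
    using cINF_lower[of "lagr f M zs" X xs] cINF_greatest[of X "f 0 xs" "lagr f M zs"]
      KKT_saddle[OF assms(1)] KKT_lagr_eq[OF assms(1)] \<open>xs \<in> X\<close> by fastforce
qed

locale primal_dual_gap_bound = prob_space P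
  for P :: "'w measure" +
  fixes X :: "'a::euclidean_space set" and f :: "nat \<Rightarrow> 'a \<Rightarrow> real" and M :: nat
    and xb :: "'w \<Rightarrow> 'a" and zb :: "'w \<Rightarrow> nat \<Rightarrow> real"
    and eps1 eps0 :: real and xs :: 'a and zs :: "nat \<Rightarrow> real"
  assumes bounded_X: "bounded X"
    and xb_in_X: "\<And>\<omega>. \<omega> \<in> space P \<Longrightarrow> xb \<omega> \<in> X"
    and zb_measurable: "\<And>i. i \<in> {1..M} \<Longrightarrow> (\<lambda>\<omega>. zb \<omega> i) \<in> borel_measurable P"
    and zb_nonneg: "\<And>i \<omega>. i \<in> {1..M} \<Longrightarrow> \<omega> \<in> space P \<Longrightarrow> 0 \<le> zb \<omega> i"
    and f_xb_integrable: "\<And>i. i \<le> M \<Longrightarrow> integrable P (\<lambda>\<omega>. f i (xb \<omega>))"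
    and zb_integrable: "\<And>i. i \<in> {1..M} \<Longrightarrow> integrable P (\<lambda>\<omega>. zb \<omega> i)"
    and dualfun_zb_integrable: "integrable P (\<lambda>\<omega>. dualfun X f M (zb \<omega>))"
    and gap_bound: "\<And>x z. admissible P X f M xb zb x z \<Longrightarrow>
      integral\<^sup>L P (gap_integrand f M xb zb x z) \<le> eps1 + eps0 * integral\<^sup>L P (\<lambda>\<omega>. sqnorm M (z \<omega>))"
    and KKT: "KKT X f M xs zs"
begin

lemma xs_in_X: "xs \<in> X"
  using KKT unfolding KKT_def by blast

lemma zs_nonneg: "i \<in> {1..M} \<Longrightarrow> 0 \<le> zs i"
  using KKT_multiplier_nonneg[OF KKT] .

lemma saddle_at_xb:
  assumes "\<omega> \<in> space P"
  shows "0 \<le> f 0 (xb \<omega>) - f 0 xs + (\<Sum>i=1..M. zs i * f i (xb \<omega>))"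
  using KKT_saddle[OF KKT xb_in_X[OF assms]] unfolding lagr_def by linarith

text \<open>At \<open>x = xs\<close> the term \<open>-\<langle>zb, f xs\<rangle>\<close> of the gap is nonnegative, as \<open>zb \<ge> 0\<close> and
  \<open>f i xs \<le> 0\<close>, and can be dropped.\<close>
lemma integral_le_by_gap_bound_at_xs:
  fixes z :: "'w \<Rightarrow> nat \<Rightarrow> real" and lb :: "'w \<Rightarrow> real"
  assumes z_meas: "\<And>i. i \<in> {1..M} \<Longrightarrow> (\<lambda>\<omega>. z \<omega> i) \<in> borel_measurable P"
    and z_nonneg: "\<And>i \<omega>. i \<in> {1..M} \<Longrightarrow> \<omega> \<in> space P \<Longrightarrow> 0 \<le> z \<omega> i"
    and zf_integrable: "\<And>i. i \<in> {1..M} \<Longrightarrow> integrable P (\<lambda>\<omega>. z \<omega> i * f i (xb \<omega>))"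
    and sqnorm_integrable: "integrable P (\<lambda>\<omega>. sqnorm M (z \<omega>))"
    and lb_integrable: "integrable P lb"
    and lb_le: "\<And>\<omega>. \<omega> \<in> space P \<Longrightarrow> lb \<omega> \<le> f 0 (xb \<omega>) - f 0 xs + (\<Sum>i=1..M. z \<omega> i * f i (xb \<omega>))"
  shows "integral\<^sup>L P lb \<le> eps1 + eps0 * integral\<^sup>L P (\<lambda>\<omega>. sqnorm M (z \<omega>))"
proof -
  let ?gap = "gap_integrand f M xb zb (\<lambda>_. xs) z"
  have gap_integrable: "integrable P ?gap"
    unfolding gap_integrand_def
    by (intro Bochner_Integration.integrable_add Bochner_Integration.integrable_diff integrable_const
        Bochner_Integration.integrable_sum integrable_mult_left f_xb_integrable zb_integrable zf_integrable) auto
  have "admissible P X f M xb zb (\<lambda>_. xs) z"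
    unfolding admissible_def using z_meas z_nonneg sqnorm_integrable xs_in_X gap_integrable by auto
  then have "integral\<^sup>L P ?gap \<le> eps1 + eps0 * integral\<^sup>L P (\<lambda>\<omega>. sqnorm M (z \<omega>))"
    by (rule gap_bound)
  moreover have "integral\<^sup>L P lb \<le> integral\<^sup>L P ?gap"
  proof (rule integral_mono[OF lb_integrable gap_integrable])
    fix \<omega> assume \<omega>: "\<omega> \<in> space P"
    have "(\<Sum>i=1..M. zb \<omega> i * f i xs) \<le> 0"
      using zb_nonneg[OF _ \<omega>] KKT_feasible[OF KKT] by (intro sum_nonpos mult_nonneg_nonpos) auto
    then show "lb \<omega> \<le> ?gap \<omega>"
      using lb_le[OF \<omega>] unfolding gap_integrand_def by linarith
  qed
  ultimately show ?thesis by linarith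
qed

lemma eps0_nonneg:
  assumes "M \<noteq> 0"
  shows "0 \<le> eps0"
proof -
  define h where "h = (\<lambda>\<omega>. \<Sum>i=1..M. f i (xb \<omega>))"
  have h_integrable: "integrable P h"
    unfolding h_def by (intro Bochner_Integration.integrable_sum f_xb_integrable) auto
  have f0_integrable: "integrable P (\<lambda>\<omega>. f 0 (xb \<omega>) - f 0 xs)"
    using f_xb_integrable[of 0] by simp
  have "(integral\<^sup>L P (\<lambda>\<omega>. f 0 (xb \<omega>) - f 0 xs) - eps1) + t * integral\<^sup>L P h \<le> (eps0 * M) * t\<^sup>2"
    if t: "t \<ge> 0" for t
  proof -
    have lb_integrable: "integrable P (\<lambda>\<omega>. f 0 (xb \<omega>) - f 0 xs + t * h \<omega>)"
      using f0_integrable h_integrable by simp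
    have "integral\<^sup>L P (\<lambda>\<omega>. f 0 (xb \<omega>) - f 0 xs + t * h \<omega>)
        \<le> eps1 + eps0 * integral\<^sup>L P (\<lambda>\<omega>. sqnorm M (\<lambda>i. t))"
      by (rule integral_le_by_gap_bound_at_xs[OF _ _ _ _ lb_integrable])
        (use t f_xb_integrable in \<open>auto simp: h_def sum_distrib_left sqnorm_def\<close>)
    moreover have "integral\<^sup>L P (\<lambda>\<omega>. f 0 (xb \<omega>) - f 0 xs + t * h \<omega>)
        = integral\<^sup>L P (\<lambda>\<omega>. f 0 (xb \<omega>) - f 0 xs) + t * integral\<^sup>L P h"
      using Bochner_Integration.integral_add[OF f0_integrable integrable_mult_right[OF h_integrable]]
      by simp
    ultimately show ?thesis by (simp add: sqnorm_def prob_space algebra_simps)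
  qed
  then have "0 \<le> eps0 * M" by (intro nonneg_if_affine_le_quadratic) blast
  then show ?thesis using assms by (simp add: zero_le_mult_iff)
qed

lemma eps0_mult_sqnorm_nonneg: "0 \<le> eps0 * sqnorm M v"
  using eps0_nonneg by (cases "M = 0") (auto simp: sqnorm_def sum_nonneg)

lemma eps0_mult_integral_sqnorm_le:
  assumes "integrable P (\<lambda>\<omega>. sqnorm M (w \<omega>))"
    and "\<And>\<omega>. \<omega> \<in> space P \<Longrightarrow> sqnorm M (w \<omega>) \<le> sqnorm M v"
  shows "eps0 * integral\<^sup>L P (\<lambda>\<omega>. sqnorm M (w \<omega>)) \<le> eps0 * sqnorm M v"
proof (cases "M = 0")
  case True
  then show ?thesis by (simp add: sqnorm_def)
next
  case False
  have "integral\<^sup>L P (\<lambda>\<omega>. sqnorm M (w \<omega>)) \<le> integral\<^sup>L P (\<lambda>\<omega>. sqnorm M v)"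
    using assms by (intro integral_mono) auto
  then show ?thesis using eps0_nonneg[OF False] by (simp add: prob_space mult_left_mono)
qed

lemma integral_le_by_gap_bound_on_violated:
  fixes a b :: "nat \<Rightarrow> real" and lb :: "'w \<Rightarrow> real"
  assumes a: "\<And>i. i \<in> {1..M} \<Longrightarrow> 0 \<le> a i" and b: "\<And>i. i \<in> {1..M} \<Longrightarrow> 0 \<le> b i"
    and lb_integrable: "integrable P lb"
    and lb_le: "\<And>\<omega>. \<omega> \<in> space P \<Longrightarrow> lb \<omega> \<le> f 0 (xb \<omega>) - f 0 xs
      + (\<Sum>i=1..M. a i * f i (xb \<omega>) + b i * max (f i (xb \<omega>)) 0)"
  shows "integral\<^sup>L P lb \<le> eps1 + eps0 * sqnorm M (\<lambda>i. a i + b i)"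
proof -
  define z where "z = (\<lambda>\<omega> i. a i + (if 0 < f i (xb \<omega>) then b i else 0))"
  have zf: "z \<omega> i * f i (xb \<omega>) = a i * f i (xb \<omega>) + b i * max (f i (xb \<omega>)) 0" for \<omega> i
    unfolding z_def by (auto simp: distrib_right)
  have z_meas: "(\<lambda>\<omega>. z \<omega> i) \<in> borel_measurable P" if "i \<in> {1..M}" for i
  proof -
    have [measurable]: "(\<lambda>\<omega>. f i (xb \<omega>)) \<in> borel_measurable P"
      using f_xb_integrable that by auto
    show ?thesis unfolding z_def by measurable
  qed
  have sqnorm_le: "sqnorm M (z \<omega>) \<le> sqnorm M (\<lambda>i. a i + b i)" for \<omega>
    unfolding sqnorm_def z_def using a b by (intro sum_mono power_mono) auto
  have sqnorm_integrable: "integrable P (\<lambda>\<omega>. sqnorm M (z \<omega>))"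
  proof (rule integrable_const_bound[where B = "sqnorm M (\<lambda>i. a i + b i)"])
    show "AE \<omega> in P. norm (sqnorm M (z \<omega>)) \<le> sqnorm M (\<lambda>i. a i + b i)"
      using sqnorm_le by (auto simp: sqnorm_def sum_nonneg)
    show "(\<lambda>\<omega>. sqnorm M (z \<omega>)) \<in> borel_measurable P"
      unfolding sqnorm_def by (intro borel_measurable_sum borel_measurable_power z_meas)
  qed
  have "integral\<^sup>L P lb \<le> eps1 + eps0 * integral\<^sup>L P (\<lambda>\<omega>. sqnorm M (z \<omega>))"
  proof (rule integral_le_by_gap_bound_at_xs[OF z_meas _ _ sqnorm_integrable lb_integrable])
    show "0 \<le> z \<omega> i" if "i \<in> {1..M}" for i \<omega> using a b that by (simp add: z_def)
    show "integrable P (\<lambda>\<omega>. z \<omega> i * f i (xb \<omega>))" if "i \<in> {1..M}" for i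
      unfolding zf using that
      by (intro Bochner_Integration.integrable_add integrable_mult_right integrable_max
          f_xb_integrable integrable_const) auto
    show "lb \<omega> \<le> f 0 (xb \<omega>) - f 0 xs + (\<Sum>i=1..M. z \<omega> i * f i (xb \<omega>))" if "\<omega> \<in> space P" for \<omega>
      unfolding zf using lb_le[OF that] .
  qed
  also have "\<dots> \<le> eps1 + eps0 * sqnorm M (\<lambda>i. a i + b i)"
    using eps0_mult_integral_sqnorm_le[OF sqnorm_integrable sqnorm_le] by simp
  finally show ?thesis .
qed

text \<open>By the saddle inequality, \<open>f 0 xs - f 0 xb \<le> \<langle>zs, f xb\<rangle> \<le> \<langle>zs, [f xb]\<^sub>+\<rangle>\<close>, so
  \<open>\<bar>f 0 xb - f 0 xs\<bar>\<close> is dominated by the gap with multipliers \<open>2 zs\<close> on the violated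
  constraints.\<close>
lemma objective_gap_bound:
  "integral\<^sup>L P (\<lambda>\<omega>. \<bar>f 0 (xb \<omega>) - f 0 xs\<bar>) \<le> eps1 + 4 * eps0 * sqnorm M zs"
proof -
  have "integral\<^sup>L P (\<lambda>\<omega>. \<bar>f 0 (xb \<omega>) - f 0 xs\<bar>) \<le> eps1 + eps0 * sqnorm M (\<lambda>i. 0 + 2 * zs i)"
  proof (rule integral_le_by_gap_bound_on_violated)
    show "integrable P (\<lambda>\<omega>. \<bar>f 0 (xb \<omega>) - f 0 xs\<bar>)"
      using f_xb_integrable[of 0] by (intro integrable_abs Bochner_Integration.integrable_diff) auto
    fix \<omega> assume \<omega>: "\<omega> \<in> space P"
    have "(\<Sum>i=1..M. zs i * f i (xb \<omega>)) \<le> (\<Sum>i=1..M. zs i * max (f i (xb \<omega>)) 0)"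
      "0 \<le> (\<Sum>i=1..M. zs i * max (f i (xb \<omega>)) 0)"
      using zs_nonneg by (auto intro!: sum_mono mult_left_mono sum_nonneg)
    moreover have "(\<Sum>i=1..M. 0 * f i (xb \<omega>) + 2 * zs i * max (f i (xb \<omega>)) 0)
        = 2 * (\<Sum>i=1..M. zs i * max (f i (xb \<omega>)) 0)"
      by (simp add: sum_distrib_left mult.assoc)
    ultimately show "\<bar>f 0 (xb \<omega>) - f 0 xs\<bar> \<le> f 0 (xb \<omega>) - f 0 xs
        + (\<Sum>i=1..M. 0 * f i (xb \<omega>) + 2 * zs i * max (f i (xb \<omega>)) 0)"
      using saddle_at_xb[OF \<omega>] by linarith
  qed (use zs_nonneg in auto)
  also have "sqnorm M (\<lambda>i. 0 + 2 * zs i) = 4 * sqnorm M zs"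
    by (simp add: sqnorm_def power_mult_distrib sum_distrib_left)
  finally show ?thesis by simp
qed

lemma constraint_violation_bound:
  "integral\<^sup>L P (\<lambda>\<omega>. \<Sum>i=1..M. max (f i (xb \<omega>)) 0) \<le> eps1 + eps0 * sqnorm M (\<lambda>i. 1 + zs i)"
proof -
  have "integral\<^sup>L P (\<lambda>\<omega>. \<Sum>i=1..M. max (f i (xb \<omega>)) 0) \<le> eps1 + eps0 * sqnorm M (\<lambda>i. zs i + 1)"
  proof (rule integral_le_by_gap_bound_on_violated)
    show "integrable P (\<lambda>\<omega>. \<Sum>i=1..M. max (f i (xb \<omega>)) 0)"
      by (intro Bochner_Integration.integrable_sum integrable_max f_xb_integrable integrable_const) auto
    fix \<omega> assume \<omega>: "\<omega> \<in> space P"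
    have "(\<Sum>i=1..M. zs i * f i (xb \<omega>) + 1 * max (f i (xb \<omega>)) 0)
        = (\<Sum>i=1..M. zs i * f i (xb \<omega>)) + (\<Sum>i=1..M. max (f i (xb \<omega>)) 0)"
      by (simp add: sum.distrib)
    then show "(\<Sum>i=1..M. max (f i (xb \<omega>)) 0) \<le> f 0 (xb \<omega>) - f 0 xs
        + (\<Sum>i=1..M. zs i * f i (xb \<omega>) + 1 * max (f i (xb \<omega>)) 0)"
      using saddle_at_xb[OF \<omega>] by linarith
  qed (use zs_nonneg in auto)
  then show ?thesis by (simp add: add.commute)
qed

lemma dual_gap_le_plus:
  assumes "\<delta> > 0"
  shows "integral\<^sup>L P (\<lambda>\<omega>. dualfun X f M zs - dualfun X f M (zb \<omega>)) \<le> eps1 + eps0 * sqnorm M zs + \<delta>"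
proof -
  have "X \<noteq> {}" using xs_in_X by blast
  have bdd: "bdd_below (lagr f M (zb \<omega>) ` X)" if "\<omega> \<in> space P" for \<omega>
    using zb_nonneg that by (intro KKT_bdd_below_lagr[OF KKT bounded_X]) auto
  obtain x where x_meas: "x \<in> measurable P (count_space UNIV)" and x_in_X: "\<And>\<omega>. x \<omega> \<in> X"
    and x_near: "\<And>\<omega>. \<omega> \<in> space P \<Longrightarrow> lagr f M (zb \<omega>) (x \<omega>) < dualfun X f M (zb \<omega>) + \<delta>"
    using measurable_near_minimizer_of_lagr[OF \<open>X \<noteq> {}\<close> zb_measurable
          borel_measurable_integrable[OF dualfun_zb_integrable] bdd assms] by blast
  have x_borel: "x \<in> borel_measurable P" and f_x_meas: "(\<lambda>\<omega>. f i (x \<omega>)) \<in> borel_measurable P" for i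
    using x_meas by (auto intro: measurable_compose)
  have dualfun_le: "dualfun X f M (zb \<omega>) \<le> lagr f M (zb \<omega>) (x \<omega>)" if "\<omega> \<in> space P" for \<omega>
    unfolding dualfun_def using cINF_lower[OF bdd[OF that] x_in_X] .
  have lagr_x_integrable: "integrable P (\<lambda>\<omega>. lagr f M (zb \<omega>) (x \<omega>))"
  proof (rule Bochner_Integration.integrable_bound)
    show "integrable P (\<lambda>\<omega>. \<bar>dualfun X f M (zb \<omega>)\<bar> + \<delta>)"
      using dualfun_zb_integrable by (intro Bochner_Integration.integrable_add integrable_abs integrable_const)
    show "(\<lambda>\<omega>. lagr f M (zb \<omega>) (x \<omega>)) \<in> borel_measurable P"
      unfolding lagr_def
      by (intro borel_measurable_add borel_measurable_sum borel_measurable_times f_x_meas zb_measurable) auto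
    show "AE \<omega> in P. norm (lagr f M (zb \<omega>) (x \<omega>)) \<le> norm (\<bar>dualfun X f M (zb \<omega>)\<bar> + \<delta>)"
      using dualfun_le x_near \<open>\<delta> > 0\<close> by (intro AE_I2) (fastforce simp: abs_le_iff)
  qed
  have lagr_xb_integrable: "integrable P (\<lambda>\<omega>. lagr f M zs (xb \<omega>))"
    unfolding lagr_def
    by (intro Bochner_Integration.integrable_add Bochner_Integration.integrable_sum
        integrable_mult_right f_xb_integrable) auto
  let ?z = "\<lambda>_ :: 'w. zs"
  have gap_eq: "gap_integrand f M xb zb x ?z = (\<lambda>\<omega>. lagr f M zs (xb \<omega>) - lagr f M (zb \<omega>) (x \<omega>))"
    unfolding gap_integrand_def lagr_def by (rule ext) simp
  have gap_integrable: "integrable P (gap_integrand f M xb zb x ?z)"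
    unfolding gap_eq using lagr_xb_integrable lagr_x_integrable by simp
  have "admissible P X f M xb zb x ?z"
    unfolding admissible_def using x_borel x_in_X zs_nonneg gap_integrable by auto
  then have "integral\<^sup>L P (gap_integrand f M xb zb x ?z) \<le> eps1 + eps0 * sqnorm M zs"
    using gap_bound[of x ?z] by (simp add: prob_space)
  moreover have "integral\<^sup>L P (\<lambda>\<omega>. dualfun X f M zs - dualfun X f M (zb \<omega>) - \<delta>)
      \<le> integral\<^sup>L P (gap_integrand f M xb zb x ?z)"
  proof (rule integral_mono[OF _ gap_integrable])
    show "integrable P (\<lambda>\<omega>. dualfun X f M zs - dualfun X f M (zb \<omega>) - \<delta>)"
      using dualfun_zb_integrable by simp
    fix \<omega> assume \<omega>: "\<omega> \<in> space P"
    show "dualfun X f M zs - dualfun X f M (zb \<omega>) - \<delta> \<le> gap_integrand f M xb zb x ?z \<omega>"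
      using KKT_saddle[OF KKT xb_in_X[OF \<omega>]] x_near[OF \<omega>]
      unfolding gap_eq KKT_dualfun_eq[OF KKT bounded_X] by simp
  qed
  moreover have "integral\<^sup>L P (\<lambda>\<omega>. dualfun X f M zs - dualfun X f M (zb \<omega>) - \<delta>)
      = integral\<^sup>L P (\<lambda>\<omega>. dualfun X f M zs - dualfun X f M (zb \<omega>)) - \<delta>"
    using dualfun_zb_integrable by (simp add: prob_space)
  ultimately show ?thesis by linarith
qed

lemma dual_gap_bound:
  "integral\<^sup>L P (\<lambda>\<omega>. dualfun X f M zs - dualfun X f M (zb \<omega>)) \<le> eps1 + eps0 * sqnorm M zs"
  using dual_gap_le_plus by (rule field_le_epsilon)

end

theorem lemma9:
  fixes P :: "'w measure" and X :: "'a::euclidean_space set"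
    and f :: "nat \<Rightarrow> 'a \<Rightarrow> real" and M :: nat
    and xb :: "'w \<Rightarrow> 'a" and zb :: "'w \<Rightarrow> nat \<Rightarrow> real"
    and eps1 eps0 :: real and xs :: 'a and zs :: "nat \<Rightarrow> real"
  assumes "prob_space P"
    and "compact X" and "convex X"
    and "\<forall>i\<in>{0..M}. convex_on X (f i)"
    and "xb \<in> borel_measurable P" and "\<forall>\<omega>\<in>space P. xb \<omega> \<in> X"
    and "\<forall>i\<in>{1..M}. (\<lambda>\<omega>. zb \<omega> i) \<in> borel_measurable P \<and> (\<forall>\<omega>\<in>space P. zb \<omega> i \<ge> 0)"
    and "\<forall>i\<in>{0..M}. integrable P (\<lambda>\<omega>. f i (xb \<omega>))"
    and "\<forall>i\<in>{1..M}. integrable P (\<lambda>\<omega>. zb \<omega> i)"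
    and "integrable P (\<lambda>\<omega>. dualfun X f M (zb \<omega>))"
    and "\<forall>(x :: 'w \<Rightarrow> 'a) (z :: 'w \<Rightarrow> nat \<Rightarrow> real). admissible P X f M xb zb x z \<longrightarrow>
           integral\<^sup>L P (gap_integrand f M xb zb x z) \<le> eps1 + eps0 * integral\<^sup>L P (\<lambda>\<omega>. sqnorm M (z \<omega>))"
    and "KKT X f M xs zs"
  shows "integral\<^sup>L P (\<lambda>\<omega>. \<bar>f 0 (xb \<omega>) - f 0 xs\<bar>) \<le> 2 * eps1 + 9 * eps0 * sqnorm M zs \<and>
         integral\<^sup>L P (\<lambda>\<omega>. \<Sum>i=1..M. max (f i (xb \<omega>)) 0) \<le> eps1 + eps0 * sqnorm M (\<lambda>i. 1 + zs i) \<and>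
         integral\<^sup>L P (\<lambda>\<omega>. dualfun X f M zs - dualfun X f M (zb \<omega>)) \<le> 3/2 * (eps1 + 3 * eps0 * sqnorm M zs)"
proof -
  interpret primal_dual_gap_bound P X f M xb zb eps1 eps0 xs zs
  proof (rule primal_dual_gap_bound.intro[OF assms(1)], unfold_locales)
    show "bounded X" using assms(2) by (rule compact_imp_bounded)
  qed (use assms in \<open>simp_all add: atLeast0AtMost\<close>)
  have "0 \<le> eps0 * sqnorm M zs" by (rule eps0_mult_sqnorm_nonneg)
  txt \<open>Together with \<open>objective_gap_bound\<close> this gives \<open>eps1 + 4 eps0 \<parallel>zs\<parallel>\<^sup>2 \<ge> 0\<close>,
    which absorbs the looser constants.\<close>
  moreover have "0 \<le> integral\<^sup>L P (\<lambda>\<omega>. \<bar>f 0 (xb \<omega>) - f 0 xs\<bar>)" by simp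
  moreover have "3/2 * (eps1 + 3 * eps0 * sqnorm M zs) = 3/2 * eps1 + 9/2 * (eps0 * sqnorm M zs)"
    by (simp add: algebra_simps)
  ultimately show ?thesis
    using objective_gap_bound constraint_violation_bound dual_gap_bound
    unfolding mult.assoc by (intro conjI) linarith+
qed

end
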